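(* Let $q$ be a prime power and $d$ an integer with $5\le d\le q$. Let $\mathcal C$ be the $[q+1,q+2-d,d]_q$ normalized GDRS code and let $\mathcal V^{(2)}$ be a coset of weight $2$ of $\mathcal C$ with coset leader $\mathbf v_2(j_1,j_2;\gamma_1,\gamma_2)$, $\gamma_1,\gamma_2\in\mathbb F_q^*$. Then the number $B_{d-2}(\mathcal V^{(2)})$ of vectors of weight $d-2$ in $\mathcal V^{(2)}$ does not depend on the positions $j_1,j_2$ and equals $\mathrm P^\times_{q,d-2}(-\gamma_2/\gamma_1)$.
   Context: Normalized GDRS code: the $\mathbb F_q$-linear code of length $q+1$ which is the kernel of the $(d-1)\times(q+1)$ parity check matrix whose first $q$ columns are $(1,m,m^2,\dots,m^{d-2})^{T}$ for $m$ running over all elements of $\mathbb F_q$ (nonzero ones first, then $0$) and whose last column is $(0,\dots,0,1)^{T}$. A coset of weight $W$ is a coset $\mathbf v+\mathcal C$ whose minimum Hamming weight is $W$; a coset leader is a vector of minimum weight in it. $\mathbf v_2(j_1,j_2;\gamma_1,\gamma_2)$ is the vector of $\mathbb F_q^{q+1}$ with $\gamma_1,\gamma_2$ in positions $j_1\ne j_2$ and zeros elsewhere. For $\mu<q-1$ and $\gamma\in\mathbb F_q^*$, $\mathrm P^\times_{q,\mu}(\gamma)$ is the number of $\mu$-element subsets $\{\alpha_1,\dots,\alpha_\mu\}\subset\mathbb F_q^*$ (distinct elements) whose product is $\gamma$. *)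

theory Defs
  imports Main
begin

text \<open>Coordinates of \<open>F_q^(q+1)\<close> are indexed by \<open>'a option\<close>:
  position \<open>Some m\<close> is the column \<open>(1,m,...,m^(d-2))^T\<close> of the parity check
  matrix, position \<open>None\<close> is the last column \<open>(0,...,0,1)^T\<close>.\<close>

type_synonym 'a vec = "'a option \<Rightarrow> 'a"

definition hwt :: "('a::zero) vec \<Rightarrow> nat" where
  "hwt x = card {j. x j \<noteq> 0}"

definition gdrs_code :: "nat \<Rightarrow> ('a::{finite,field}) vec set" where
  "gdrs_code d = {c. \<forall>i < d - 1.
      (\<Sum>m\<in>UNIV. c (Some m) * m ^ i) + (if i = d - 2 then c None else 0) = 0}"

definition coset :: "('a::plus) vec \<Rightarrow> 'a vec set \<Rightarrow> 'a vec set" where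
  "coset v C = {(\<lambda>j. v j + c j) | c. c \<in> C}"

definition coset_weight :: "('a::zero) vec set \<Rightarrow> nat" where
  "coset_weight V = Min (hwt ` V)"

definition vec2 :: "'a option \<Rightarrow> 'a option \<Rightarrow> 'a \<Rightarrow> 'a \<Rightarrow> ('a::zero) vec" where
  "vec2 j1 j2 g1 g2 = (\<lambda>j. if j = j1 then g1 else if j = j2 then g2 else 0)"

definition B_count :: "nat \<Rightarrow> ('a::zero) vec set \<Rightarrow> nat" where
  "B_count w V = card {x \<in> V. hwt x = w}"

definition P_times :: "nat \<Rightarrow> 'a::{finite,field} \<Rightarrow> nat" where
  "P_times mu g = card {S. S \<subseteq> {x::'a. x \<noteq> 0} \<and> card S = mu \<and> \<Prod>S = g}"

end

theory Submission
  imports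
    Defs
    "HOL-Computational_Algebra.Polynomial"
    "HOL-Library.FuncSet"
    "HOL-Library.Function_Algebras"
    "HOL-Library.Cardinality"
begin

text \<open>
  A vector \<open>x\<close> of weight \<open>d - 2\<close> in the coset of \<open>v = v\<^sub>2(j\<^sub>1, j\<^sub>2; \<gamma>\<^sub>1, \<gamma>\<^sub>2)\<close>
  differs from \<open>v\<close> by a codeword \<open>c\<close>. The dual of the code is the evaluation code of
  polynomials of degree at most \<open>d - 2\<close> on the projective line, so the code is MDS: a
  nonzero codeword has weight at least \<open>d\<close>. Hence the support \<open>T\<close> of \<open>x\<close> avoids
  \<open>j\<^sub>1, j\<^sub>2\<close> and determines \<open>x\<close>. Pairing \<open>c\<close>, which lives on
  \<open>T \<union> {j\<^sub>1, j\<^sub>2}\<close>, with the polynomial vanishing on \<open>T\<close> gives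
  \<open>c(j\<^sub>1) \<Prod>\<^sub>t\<^sub>\<in>\<^sub>T (j\<^sub>1 - t) + c(j\<^sub>2) \<Prod>\<^sub>t\<^sub>\<in>\<^sub>T (j\<^sub>2 - t) = 0\<close>,
  so \<open>c(j\<^sub>1) = -\<gamma>\<^sub>1\<close>, \<open>c(j\<^sub>2) = -\<gamma>\<^sub>2\<close> says exactly that the Moebius map
  \<open>\<rho>(t) = (j\<^sub>1 - t)/(j\<^sub>2 - t)\<close> has product \<open>-\<gamma>\<^sub>2/\<gamma>\<^sub>1\<close> over \<open>T\<close>.
  Conversely every such \<open>T\<close> is the support of a coset vector, because the syndromes of
  the vectors supported on \<open>d - 1\<close> given positions exhaust \<open>F\<^sub>q\<^sup>d\<^sup>-\<^sup>1\<close>.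
  Since \<open>\<rho>\<close> maps the \<open>q - 1\<close> positions other than \<open>j\<^sub>1, j\<^sub>2\<close> bijectively onto
  \<open>F\<^sub>q\<^sup>*\<close>, the vectors are counted by the \<open>(d - 2)\<close>-subsets of \<open>F\<^sub>q\<^sup>*\<close> with
  product \<open>-\<gamma>\<^sub>2/\<gamma>\<^sub>1\<close>.
\<close>

definition supp :: "('a::zero) vec \<Rightarrow> 'a option set" where
  "supp x = {j. x j \<noteq> 0}"

lemma hwt_eq_card_supp: "hwt x = card (supp x)"
  by (simp add: hwt_def supp_def)

lemma supp_diff_subset: "supp (x - y) \<subseteq> supp x \<union> supp y"
  for x y :: "('a::ab_group_add) vec"
  by (auto simp: supp_def)

lemma mem_coset_iff: "x \<in> coset v C \<longleftrightarrow> x - v \<in> C"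
  for x v :: "('a::ab_group_add) vec"
proof
  assume "x \<in> coset v C"
  then show "x - v \<in> C"
    by (auto simp: coset_def fun_diff_def)
next
  assume "x - v \<in> C"
  then show "x \<in> coset v C"
    unfolding coset_def by (intro CollectI exI[of _ "x - v"]) auto
qed

lemma sum_UNIV_option: "(\<Sum>j\<in>UNIV. g j) = g None + (\<Sum>m\<in>UNIV. g (Some m))"
  for g :: "('b::finite) option \<Rightarrow> 'a::comm_monoid_add"
  by (simp add: UNIV_option_conv sum.reindex)

lemma Int_range_Some: "T \<inter> range Some = T - {None}"
  by (auto simp: notin_range_Some)

lemma prod_Some_vimage:
  fixes g :: "('b::finite) option \<Rightarrow> 'a::comm_monoid_mult"
  assumes "g None = 1"
  shows "prod g T = (\<Prod>m\<in>Some -` T. g (Some m))"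
proof -
  have "prod g T = prod g (T - {None})"
    using assms by (cases "None \<in> T") (simp_all add: prod.remove)
  also have "\<dots> = (\<Prod>m\<in>Some -` T. g (Some m))"
    by (rule prod.reindex_cong[where l = Some]) (simp_all add: Int_range_Some)
  finally show ?thesis .
qed

lemma card_Some_vimage: "card (Some -` T) = card (T - {None})"
  using card_image[of Some "Some -` T"] by (simp add: Int_range_Some)

lemma card_funs_vanishing_outside:
  fixes S :: "'b set"
  assumes "finite S"
  shows "card {f :: 'b \<Rightarrow> 'a::{finite,zero}. \<forall>x. x \<notin> S \<longrightarrow> f x = 0} = CARD('a) ^ card S"
proof -
  have "bij_betw (\<lambda>f. restrict f S) {f :: 'b \<Rightarrow> 'a. \<forall>x. x \<notin> S \<longrightarrow> f x = 0} (S \<rightarrow>\<^sub>E UNIV)"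
    by (rule bij_betwI[where g = "\<lambda>g x. if x \<in> S then g x else 0"]) (auto simp: fun_eq_iff)
  then show ?thesis
    using assms by (simp add: bij_betw_same_card card_PiE)
qed

lemma card_subsets_prod_bij_betw:
  fixes f :: "'b \<Rightarrow> 'a::comm_monoid_mult"
  assumes f: "bij_betw f A B"
  shows "card {T. T \<subseteq> A \<and> card T = k \<and> prod f T = g} = card {S. S \<subseteq> B \<and> card S = k \<and> \<Prod>S = g}"
proof -
  have "bij_betw (image f) {T \<in> Pow A. card T = k \<and> prod f T = g} {S \<in> Pow B. card S = k \<and> \<Prod>S = g}"
  proof (rule bij_betw_Collect[OF bij_betw_image_Pow[OF f]])
    fix T
    assume "T \<in> Pow A"
    then have "inj_on f T"
      using f by (auto simp: bij_betw_def intro: inj_on_subset)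
    then show "card (f ` T) = k \<and> \<Prod>(f ` T) = g \<longleftrightarrow> card T = k \<and> prod f T = g"
      by (simp add: card_image prod.reindex)
  qed
  from bij_betw_same_card[OF this] show ?thesis
    by simp
qed

definition gdrs_syndrome :: "nat \<Rightarrow> ('a::{finite,field}) vec \<Rightarrow> nat \<Rightarrow> 'a" where
  "gdrs_syndrome d c i = (if i < d - 1
     then (\<Sum>m\<in>UNIV. c (Some m) * m ^ i) + (if i = d - 2 then c None else 0) else 0)"

lemma gdrs_code_iff_syndrome: "c \<in> gdrs_code d \<longleftrightarrow> gdrs_syndrome d c = 0"
  by (auto simp: gdrs_code_def gdrs_syndrome_def fun_eq_iff)

lemma gdrs_syndrome_diff: "gdrs_syndrome d (x - y) = gdrs_syndrome d x - gdrs_syndrome d y"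
  by (auto simp: gdrs_syndrome_def fun_eq_iff algebra_simps sum_subtractf)

lemma mem_gdrs_coset_iff: "x \<in> coset v (gdrs_code d) \<longleftrightarrow> gdrs_syndrome d x = gdrs_syndrome d v"
  by (simp add: mem_coset_iff gdrs_code_iff_syndrome gdrs_syndrome_diff)

text \<open>Position \<open>None\<close> is the point at infinity: there a polynomial of degree at most
  \<open>d - 2\<close> takes the value of its coefficient of \<open>x\<^sup>d\<^sup>-\<^sup>2\<close>.\<close>

definition gdrs_eval :: "nat \<Rightarrow> ('a::comm_semiring_0) poly \<Rightarrow> 'a option \<Rightarrow> 'a" where
  "gdrs_eval d f j = (case j of Some m \<Rightarrow> poly f m | None \<Rightarrow> coeff f (d - 2))"

lemma gdrs_code_orthogonal:
  fixes c :: "('a::{finite,field}) vec"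
  assumes c: "c \<in> gdrs_code d" and d: "2 \<le> d" and f: "degree f \<le> d - 2"
  shows "(\<Sum>j\<in>UNIV. c j * gdrs_eval d f j) = 0"
proof -
  have poly_f: "poly f m = (\<Sum>i<d - 1. coeff f i * m ^ i)" for m
    unfolding poly_altdef using f d by (intro sum.mono_neutral_left) (auto simp: coeff_eq_0)
  have "(\<Sum>j\<in>UNIV. c j * gdrs_eval d f j)
      = (\<Sum>i<d - 1. coeff f i * (if i = d - 2 then c None else 0))
        + (\<Sum>i<d - 1. coeff f i * (\<Sum>m\<in>UNIV. c (Some m) * m ^ i))"
    using d by (simp add: sum_UNIV_option gdrs_eval_def poly_f sum_distrib_left
        sum.swap[where A = UNIV] mult_ac if_distrib cong: if_cong)
  also have "\<dots> = (\<Sum>i<d - 1. coeff f i * gdrs_syndrome d c i)"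
    by (simp add: gdrs_syndrome_def sum.distrib distrib_left)
  also have "\<dots> = 0"
    using c by (simp add: gdrs_code_iff_syndrome)
  finally show ?thesis .
qed

text \<open>\<open>point_diff j t\<close> plays the role of \<open>j - t\<close> on the projective line, with the
  conventions \<open>\<infinity> - t = j - \<infinity> = 1\<close> for \<open>j, t \<noteq> \<infinity>\<close>; with them
  \<open>\<Prod>\<^sub>t\<^sub>\<in>\<^sub>T point_diff j t\<close> is the value at \<open>j\<close> of the monic polynomial vanishing
  on \<open>T\<close>.\<close>

definition point_diff :: "('a::field) option \<Rightarrow> 'a option \<Rightarrow> 'a" where
  "point_diff j t = (case (j, t) of
     (Some m, Some k) \<Rightarrow> m - k | (None, None) \<Rightarrow> 0 | _ \<Rightarrow> 1)"

lemma point_diff_eq_0_iff [simp]: "point_diff j t = 0 \<longleftrightarrow> j = t"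
  by (auto simp: point_diff_def split: option.splits)

definition vanishing_poly :: "('a::field) option set \<Rightarrow> 'a poly" where
  "vanishing_poly T = (\<Prod>k\<in>Some -` T. [:-k, 1:])"

lemma degree_vanishing_poly: "degree (vanishing_poly T) = card (T - {None})"
  for T :: "('a::{finite,field}) option set"
  by (simp add: vanishing_poly_def degree_prod_eq_sum_degree card_Some_vimage)

lemma lead_coeff_vanishing_poly: "lead_coeff (vanishing_poly T) = 1"
  by (simp add: vanishing_poly_def lead_coeff_prod)

lemma poly_vanishing_poly: "poly (vanishing_poly T) m = (\<Prod>t\<in>T. point_diff (Some m) t)"
  for T :: "('a::{finite,field}) option set"
  by (simp add: vanishing_poly_def poly_prod prod_Some_vimage point_diff_def)

lemma gdrs_eval_vanishing_poly:
  fixes T :: "('a::{finite,field}) option set"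
  assumes "card T = d - 2"
  shows "gdrs_eval d (vanishing_poly T) j = (\<Prod>t\<in>T. point_diff j t)"
proof (cases j)
  case None
  show ?thesis
  proof (cases "None \<in> T")
    case True
    moreover have "card T > 0"
      using True by (auto simp: card_gt_0_iff)
    ultimately have "degree (vanishing_poly T) < d - 2"
      using assms by (simp add: degree_vanishing_poly)
    then show ?thesis
      using None True by (simp add: gdrs_eval_def coeff_eq_0)
  next
    case False
    then have "degree (vanishing_poly T) = d - 2"
      using assms by (simp add: degree_vanishing_poly)
    then have "gdrs_eval d (vanishing_poly T) j = 1"
      using None lead_coeff_vanishing_poly[of T] by (simp add: gdrs_eval_def)
    moreover have "point_diff None t = 1" if "t \<in> T" for t
      using False that by (cases t) (auto simp: point_diff_def)
    ultimately show ?thesis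
      using None by simp
  qed
next
  case (Some m)
  then show ?thesis
    by (simp only: gdrs_eval_def poly_vanishing_poly option.case)
qed

lemma gdrs_code_affine_coord_eq_0:
  fixes c :: "('a::{finite,field}) vec"
  assumes c: "c \<in> gdrs_code d" and d: "2 \<le> d" and small: "card (supp c) < d"
  shows "c (Some a) = 0"
proof (rule ccontr)
  assume ca: "c (Some a) \<noteq> 0"
  define T where "T = supp c - {Some a}"
  define f where "f = vanishing_poly T"
  have "Some a \<in> supp c"
    using ca by (simp add: supp_def)
  then have "0 < card (supp c)"
    by (auto simp: card_gt_0_iff)
  then have "card T < d - 1"
    using small \<open>Some a \<in> supp c\<close> by (simp add: T_def)
  moreover have "degree f \<le> card T"
    using card_Diff1_le[of T None] by (simp add: f_def degree_vanishing_poly)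
  ultimately have "degree f \<le> d - 2"
    by linarith
  have eval_T: "gdrs_eval d f j = 0" if "j \<in> T" for j
  proof (cases j)
    case None
    then have "degree f < card T"
      using that card_Diff1_less[of T None] by (simp add: f_def degree_vanishing_poly)
    then have "degree f < d - 2"
      using \<open>card T < d - 1\<close> by linarith
    then show ?thesis
      using None by (simp add: gdrs_eval_def coeff_eq_0)
  next
    case (Some k)
    then show ?thesis
      using that by (simp add: gdrs_eval_def f_def poly_vanishing_poly)
  qed
  have "(\<Sum>j\<in>UNIV. c j * gdrs_eval d f j) = (\<Sum>j\<in>{Some a}. c j * gdrs_eval d f j)"
    using eval_T by (intro sum.mono_neutral_right) (auto simp: T_def supp_def)
  moreover have "(\<Sum>j\<in>UNIV. c j * gdrs_eval d f j) = 0"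
    using c d \<open>degree f \<le> d - 2\<close> by (rule gdrs_code_orthogonal)
  moreover have "gdrs_eval d f (Some a) \<noteq> 0"
    by (simp add: gdrs_eval_def f_def poly_vanishing_poly T_def)
  ultimately show False
    using ca by simp
qed

lemma gdrs_code_min_weight:
  fixes c :: "('a::{finite,field}) vec"
  assumes c: "c \<in> gdrs_code d" and d: "2 \<le> d" and "c \<noteq> 0"
  shows "d \<le> hwt c"
proof (rule ccontr)
  assume "\<not> d \<le> hwt c"
  then have "card (supp c) < d"
    by (simp add: hwt_eq_card_supp)
  with c d have affine_zero: "c (Some a) = 0" for a
    by (rule gdrs_code_affine_coord_eq_0)
  then have "c None = gdrs_syndrome d c (d - 2)"
    using d by (simp add: gdrs_syndrome_def)
  then have "c None = 0"
    using c by (simp add: gdrs_code_iff_syndrome)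
  have "c j = 0" for j
    using affine_zero \<open>c None = 0\<close> by (cases j) simp_all
  with \<open>c \<noteq> 0\<close> show False
    by auto
qed

lemma gdrs_two_point_relation:
  fixes c :: "('a::{finite,field}) vec"
  assumes c: "c \<in> gdrs_code d" and d: "2 \<le> d"
    and T: "card T = d - 2" "j1 \<notin> T" "j2 \<notin> T" and "j1 \<noteq> j2"
    and supp_c: "supp c \<subseteq> insert j1 (insert j2 T)"
  shows "c j1 * (\<Prod>t\<in>T. point_diff j1 t) + c j2 * (\<Prod>t\<in>T. point_diff j2 t) = 0"
proof -
  let ?e = "gdrs_eval d (vanishing_poly T)"
  have "degree (vanishing_poly T) \<le> d - 2"
    using T card_Diff1_le[of T None] by (simp add: degree_vanishing_poly)
  with c d have "(\<Sum>j\<in>UNIV. c j * ?e j) = 0"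
    by (rule gdrs_code_orthogonal)
  moreover have "(\<Sum>j\<in>UNIV. c j * ?e j) = (\<Sum>j\<in>{j1, j2}. c j * ?e j)"
    using supp_c T by (intro sum.mono_neutral_right)
      (auto simp: supp_def gdrs_eval_vanishing_poly)
  ultimately show ?thesis
    using \<open>j1 \<noteq> j2\<close> T by (simp add: gdrs_eval_vanishing_poly)
qed

lemma gdrs_coset_distance:
  fixes x y :: "('a::{finite,field}) vec"
  assumes "x \<in> coset v (gdrs_code d)" "y \<in> coset v (gdrs_code d)" "x \<noteq> y" "2 \<le> d"
  shows "d \<le> card (supp x \<union> supp y)"
proof -
  have "x - y \<in> gdrs_code d"
    using assms(1,2) by (simp add: mem_gdrs_coset_iff gdrs_code_iff_syndrome gdrs_syndrome_diff)
  then have "d \<le> hwt (x - y)"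
    using assms(3,4) by (intro gdrs_code_min_weight) simp_all
  also have "\<dots> \<le> card (supp x \<union> supp y)"
    unfolding hwt_eq_card_supp by (intro card_mono supp_diff_subset) simp
  finally show ?thesis .
qed

text \<open>The syndrome map is injective on vectors supported on \<open>S\<close> by the minimum
  distance, and both its domain and the space of syndromes have \<open>q\<^sup>d\<^sup>-\<^sup>1\<close> elements.\<close>

lemma gdrs_coset_meets_support:
  fixes w :: "('a::{finite,field}) vec"
  assumes S: "card S = d - 1" and d: "2 \<le> d"
  shows "\<exists>y \<in> coset w (gdrs_code d). supp y \<subseteq> S"
proof -
  define Y where "Y = {y :: 'a vec. \<forall>j. j \<notin> S \<longrightarrow> y j = 0}"
  define Z where "Z = {z :: nat \<Rightarrow> 'a. \<forall>i. i \<notin> {..<d - 1} \<longrightarrow> z i = 0}"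
  have "inj_on (gdrs_syndrome d) Y"
  proof (rule inj_onI)
    fix y1 y2
    assume y: "y1 \<in> Y" "y2 \<in> Y" and "gdrs_syndrome d y1 = gdrs_syndrome d y2"
    then have "y1 - y2 \<in> gdrs_code d"
      by (simp add: gdrs_code_iff_syndrome gdrs_syndrome_diff)
    moreover have "hwt (y1 - y2) < d"
    proof -
      have "supp (y1 - y2) \<subseteq> S"
        using y unfolding Y_def supp_def by (auto intro: ccontr)
      then have "hwt (y1 - y2) \<le> card S"
        by (simp add: hwt_eq_card_supp card_mono)
      then show ?thesis
        using S d by linarith
    qed
    ultimately show "y1 = y2"
      using gdrs_code_min_weight[OF _ d] by force
  qed
  moreover have "gdrs_syndrome d ` Y \<subseteq> Z"
    by (auto simp: Z_def gdrs_syndrome_def)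
  moreover have "card Y = CARD('a) ^ (d - 1)"
    using S card_funs_vanishing_outside[of S] by (simp add: Y_def)
  moreover have "card Z = CARD('a) ^ (d - 1)"
    using card_funs_vanishing_outside[of "{..<d - 1}"] by (simp add: Z_def)
  moreover have "finite Z"
    using \<open>card Z = CARD('a) ^ (d - 1)\<close> by (intro card_ge_0_finite) simp
  ultimately have "gdrs_syndrome d ` Y = Z"
    by (metis card_image card_subset_eq)
  moreover have "gdrs_syndrome d w \<in> Z"
    by (simp add: Z_def gdrs_syndrome_def)
  ultimately obtain y where "y \<in> Y" "gdrs_syndrome d y = gdrs_syndrome d w"
    by (metis imageE)
  then show ?thesis
    by (auto simp: mem_gdrs_coset_iff Y_def supp_def)
qed

text \<open>A Pluecker-type relation: both sides differ by \<open>\<plusminus>(i - j)(s - t)\<close>.\<close>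

lemma point_diff_cross_eq_iff:
  fixes i j s t :: "('a::field) option"
  shows "point_diff i s * point_diff j t = point_diff i t * point_diff j s \<longleftrightarrow> i = j \<or> s = t"
proof -
  have affine: "(a - m) * (b - k) = (a - k) * (b - m) \<longleftrightarrow> a = b \<or> m = k" for a b m k :: 'a
  proof -
    have "(a - m) * (b - k) = (a - k) * (b - m) \<longleftrightarrow> (a - b) * (m - k) = 0"
      by (simp add: algebra_simps)
    then show ?thesis
      by simp
  qed
  show ?thesis
    by (cases i; cases j; cases s; cases t) (auto simp: point_diff_def affine)
qed

lemma bij_betw_point_ratio:
  fixes j1 j2 :: "('a::{finite,field}) option"
  assumes "j1 \<noteq> j2"
  shows "bij_betw (\<lambda>t. point_diff j1 t / point_diff j2 t) (UNIV - {j1, j2}) {x. x \<noteq> 0}"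
proof -
  let ?r = "\<lambda>t. point_diff j1 t / point_diff j2 t"
  have inj: "inj_on ?r (UNIV - {j1, j2})"
  proof (rule inj_onI)
    fix s t
    assume "s \<in> UNIV - {j1, j2}" "t \<in> UNIV - {j1, j2}" and "?r s = ?r t"
    then have "point_diff j2 s \<noteq> 0" "point_diff j2 t \<noteq> 0"
      by auto
    with \<open>?r s = ?r t\<close> have "point_diff j1 s * point_diff j2 t = point_diff j1 t * point_diff j2 s"
      by (simp add: frac_eq_eq)
    with assms show "s = t"
      by (simp add: point_diff_cross_eq_iff)
  qed
  moreover have "?r ` (UNIV - {j1, j2}) \<subseteq> {x. x \<noteq> 0}"
    by auto
  moreover have "card (UNIV - {j1, j2}) = card (UNIV - {0 :: 'a})"
    using assms by (simp add: card_Diff_subset card_UNIV_option)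
  moreover have "UNIV - {0 :: 'a} = {x. x \<noteq> 0}"
    by blast
  ultimately show ?thesis
    by (simp add: bij_betw_def card_image card_subset_eq)
qed

locale gdrs_weight_two_coset =
  fixes d :: nat and j1 j2 :: "('a::{finite,field}) option" and g1 g2 :: 'a
  assumes d_ge_5: "5 \<le> d" and j1_neq_j2: "j1 \<noteq> j2"
    and g1_nonzero: "g1 \<noteq> 0" and g2_nonzero: "g2 \<noteq> 0"
begin

abbreviation leader :: "'a vec" where
  "leader \<equiv> vec2 j1 j2 g1 g2"

abbreviation V :: "'a vec set" where
  "V \<equiv> coset leader (gdrs_code d)"

definition ratio :: "'a option \<Rightarrow> 'a" where
  "ratio t = point_diff j1 t / point_diff j2 t"

lemma d_ge_2: "2 \<le> d"
  using d_ge_5 by simp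

lemma leader_apply: "leader j1 = g1" "leader j2 = g2" "j \<notin> {j1, j2} \<Longrightarrow> leader j = 0"
  using j1_neq_j2 by (auto simp: vec2_def)

lemma supp_leader: "supp leader = {j1, j2}"
  using leader_apply g1_nonzero g2_nonzero by (auto simp: supp_def)

lemma leader_in_V: "leader \<in> V"
  by (simp add: mem_coset_iff gdrs_code_def)

lemma leader_distance:
  assumes "x \<in> V" "x \<noteq> leader"
  shows "d \<le> card (supp x \<union> {j1, j2})"
  using gdrs_coset_distance[OF assms(1) leader_in_V assms(2) d_ge_2] by (simp add: supp_leader)

lemma codeword_ratio_iff:
  assumes c: "c \<in> gdrs_code d" and T: "card T = d - 2" "T \<inter> {j1, j2} = {}"
    and supp_c: "supp c \<subseteq> insert j1 (insert j2 T)" and c_j2: "c j2 = - g2"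
  shows "c j1 = - g1 \<longleftrightarrow> prod ratio T = - g2 / g1"
proof -
  define P1 where "P1 = (\<Prod>t\<in>T. point_diff j1 t)"
  define P2 where "P2 = (\<Prod>t\<in>T. point_diff j2 t)"
  have "P1 \<noteq> 0" "P2 \<noteq> 0"
    using T by (auto simp: P1_def P2_def)
  have "c j1 * P1 + c j2 * P2 = 0"
    unfolding P1_def P2_def using c d_ge_5 T supp_c j1_neq_j2
    by (intro gdrs_two_point_relation) auto
  then have "c j1 * P1 = g2 * P2"
    using c_j2 by (simp add: algebra_simps)
  have "prod ratio T = P1 / P2"
    by (simp add: ratio_def P1_def P2_def prod_dividef)
  have "c j1 = - g1 \<longleftrightarrow> c j1 * P1 = - g1 * P1"
    using \<open>P1 \<noteq> 0\<close> by (metis mult_cancel_right)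
  also have "\<dots> \<longleftrightarrow> P1 * g1 = - g2 * P2"
    using \<open>c j1 * P1 = g2 * P2\<close> by (auto simp: algebra_simps)
  also have "\<dots> \<longleftrightarrow> P1 / P2 = - g2 / g1"
    using \<open>P2 \<noteq> 0\<close> g1_nonzero by (simp add: field_simps)
  finally show ?thesis
    using \<open>prod ratio T = P1 / P2\<close> by simp
qed

lemma weight_d2_supp_disjoint:
  assumes "x \<in> V" "hwt x = d - 2"
  shows "supp x \<inter> {j1, j2} = {}"
proof (rule ccontr)
  assume meets: "supp x \<inter> {j1, j2} \<noteq> {}"
  have "x \<noteq> leader"
    using assms(2) d_ge_5 j1_neq_j2 by (auto simp: hwt_eq_card_supp supp_leader)
  with assms(1) have "d \<le> card (supp x \<union> {j1, j2})"
    by (rule leader_distance)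
  moreover have "card (supp x \<union> {j1, j2}) + card (supp x \<inter> {j1, j2}) = card (supp x) + 2"
    using card_Un_Int[of "supp x" "{j1, j2}"] j1_neq_j2 by simp
  moreover have "card (supp x \<inter> {j1, j2}) > 0"
    using meets by (simp add: card_gt_0_iff)
  ultimately show False
    using assms(2) d_ge_5 by (simp add: hwt_eq_card_supp)
qed

lemma weight_d2_ratio:
  assumes "x \<in> V" "hwt x = d - 2"
  shows "prod ratio (supp x) = - g2 / g1"
proof -
  have disj: "supp x \<inter> {j1, j2} = {}"
    using weight_d2_supp_disjoint[OF assms] .
  then have "x j1 = 0" "x j2 = 0"
    by (auto simp: supp_def)
  show ?thesis
  proof (rule codeword_ratio_iff[THEN iffD1])
    show "x - leader \<in> gdrs_code d"
      using assms(1) by (simp add: mem_coset_iff)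
    show "supp (x - leader) \<subseteq> insert j1 (insert j2 (supp x))"
      using supp_diff_subset[of x leader] by (auto simp: supp_leader)
  qed (use assms disj \<open>x j1 = 0\<close> \<open>x j2 = 0\<close> leader_apply in \<open>auto simp: hwt_eq_card_supp\<close>)
qed

lemma weight_d2_eq_if_supp_eq:
  assumes "x \<in> V" "y \<in> V" "hwt x = d - 2" "supp x = supp y"
  shows "x = y"
proof (rule ccontr)
  assume "x \<noteq> y"
  then have "d \<le> card (supp x \<union> supp y)"
    using gdrs_coset_distance[OF assms(1,2)] d_ge_5 by simp
  then show False
    using assms(3,4) d_ge_5 by (simp add: hwt_eq_card_supp)
qed

lemma weight_d2_exists:
  assumes T: "T \<subseteq> UNIV - {j1, j2}" "card T = d - 2" and ratio_T: "prod ratio T = - g2 / g1"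
  shows "\<exists>x \<in> V. supp x = T"
proof -
  have "j1 \<notin> T"
    using T by auto
  with T d_ge_5 have "card (insert j1 T) = d - 1"
    by simp
  then obtain y where y: "y \<in> V" and supp_y: "supp y \<subseteq> insert j1 T"
    using gdrs_coset_meets_support d_ge_2 by blast
  have "y j2 = 0"
    using supp_y T j1_neq_j2 by (auto simp: supp_def)
  have "y - leader \<in> gdrs_code d"
    using y by (simp add: mem_coset_iff)
  moreover have "supp (y - leader) \<subseteq> insert j1 (insert j2 T)"
    using supp_diff_subset[of y leader] supp_y by (auto simp: supp_leader)
  moreover have "T \<inter> {j1, j2} = {}"
    using T by blast
  moreover have "(y - leader) j2 = - g2"
    using \<open>y j2 = 0\<close> leader_apply by simp
  ultimately have "(y - leader) j1 = - g1"
    using codeword_ratio_iff T(2) ratio_T by blast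
  then have "y j1 = 0"
    using leader_apply by simp
  then have "supp y \<subseteq> T"
    using supp_y by (auto simp: supp_def)
  moreover have "card T \<le> card (supp y)"
  proof -
    have "y \<noteq> leader"
      using \<open>y j1 = 0\<close> leader_apply g1_nonzero by auto
    with y have "d \<le> card (supp y \<union> {j1, j2})"
      by (rule leader_distance)
    also have "\<dots> \<le> card (supp y) + 2"
      using card_Un_le[of "supp y" "{j1, j2}"] j1_neq_j2 by simp
    finally show ?thesis
      using T by linarith
  qed
  ultimately have "supp y = T"
    by (intro card_seteq) simp_all
  with y show ?thesis
    by blast
qed

lemma bij_betw_supp_weight_d2:
  "bij_betw supp {x \<in> V. hwt x = d - 2}
     {T. T \<subseteq> UNIV - {j1, j2} \<and> card T = d - 2 \<and> prod ratio T = - g2 / g1}"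
proof (rule bij_betw_imageI)
  show "inj_on supp {x \<in> V. hwt x = d - 2}"
    using weight_d2_eq_if_supp_eq by (auto intro: inj_onI)
  show "supp ` {x \<in> V. hwt x = d - 2}
      = {T. T \<subseteq> UNIV - {j1, j2} \<and> card T = d - 2 \<and> prod ratio T = - g2 / g1}"
  proof (intro equalityI subsetI)
    fix T
    assume "T \<in> supp ` {x \<in> V. hwt x = d - 2}"
    then show "T \<in> {T. T \<subseteq> UNIV - {j1, j2} \<and> card T = d - 2 \<and> prod ratio T = - g2 / g1}"
      using weight_d2_supp_disjoint weight_d2_ratio by (auto simp: hwt_eq_card_supp)
  next
    fix T
    assume "T \<in> {T. T \<subseteq> UNIV - {j1, j2} \<and> card T = d - 2 \<and> prod ratio T = - g2 / g1}"
    then obtain x where "x \<in> V" "supp x = T" "card T = d - 2"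
      using weight_d2_exists by blast
    then show "T \<in> supp ` {x \<in> V. hwt x = d - 2}"
      by (intro image_eqI[of _ _ x]) (simp_all add: hwt_eq_card_supp)
  qed
qed

lemma B_count_weight_d2: "B_count (d - 2) V = P_times (d - 2) (- g2 / g1)"
proof -
  have "B_count (d - 2) V = card {T. T \<subseteq> UNIV - {j1, j2} \<and> card T = d - 2 \<and> prod ratio T = - g2 / g1}"
    unfolding B_count_def by (rule bij_betw_same_card[OF bij_betw_supp_weight_d2])
  also have "\<dots> = P_times (d - 2) (- g2 / g1)"
    unfolding P_times_def ratio_def
    by (rule card_subsets_prod_bij_betw[OF bij_betw_point_ratio[OF j1_neq_j2]])
  finally show ?thesis .
qed

end

theorem theorem3p4:
  fixes g1 g2 :: "'a::{finite,field}" and j1 j2 :: "'a option" and d :: nat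
  assumes "5 \<le> d" and "d \<le> card (UNIV :: 'a set)"
    and "j1 \<noteq> j2" and "g1 \<noteq> 0" and "g2 \<noteq> 0"
    and "coset_weight (coset (vec2 j1 j2 g1 g2) (gdrs_code d)) = 2"
  shows "B_count (d - 2) (coset (vec2 j1 j2 g1 g2) (gdrs_code d)) = P_times (d - 2) (- g2 / g1)"
proof -
  interpret gdrs_weight_two_coset d j1 j2 g1 g2
    using assms by unfold_locales
  show ?thesis
    by (rule B_count_weight_d2)
qed

end
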